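(* Consider the algorithm ECCom described in the context, and fix an epoch $i$. If $f_N^{i'}+f_L^{i'}\le 1/4$, then with high probability $f_N^{i}+f_L^{i}\le 1/3$.
   Context: Setting. A dynamic system of IDs with at least $n_0$ good IDs at all times; "with high probability" means with probability at least $1-n_0^{-c'}$ for a desired constant $c'$ (relative to a lifetime of $O(n_0^{\gamma})$ events, $\gamma\ge1$ a constant). A committee runs algorithm ECCom: it maintains $\mathcal S_{\mathrm{old}}$, the set of IDs present after the most recent purge (start of the epoch), and $\mathcal S$, the current set of IDs. It uses a hash function $h'$, unknown to the IDs and behaving as a uniformly random function to $[0,1)$, and places an ID $v$ in the sample when $h'(v)\le c\log n_0/|\mathcal S_{\mathrm{old}}|$, where $c>0$ is a sufficiently large constant depending on $\gamma$. The sample set $\mathcal S'_{\mathrm{old}}$ consists of the sampled IDs of $\mathcal S_{\mathrm{old}}$ at the start of the epoch; the current sample set $\mathcal S'$ consists of the sampled IDs currently present (sampled newly joined IDs are added, departed IDs removed). A purge is triggered when $|(\mathcal S'\cup\mathcal S'_{\mathrm{old}})\setminus(\mathcal S'\cap\mathcal S'_{\mathrm{old}})|\ge|\mathcal S'_{\mathrm{old}}|/4$. Notation. For epoch $i$: $f_N^i$ is the fraction (relative to $|\mathcal S_{\mathrm{old}}|$) of IDs that joined during the epoch and remain active, and $f_L^i$ is the fraction of IDs of $\mathcal S_{\mathrm{old}}$ that have left; $f_N^{i'}$ and $f_L^{i'}$ are the corresponding fractions for the sample sets (relative to $|\mathcal S'_{\mathrm{old}}|$, counting sampled new IDs remaining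 in $\mathcal S'$ and IDs of $\mathcal S'_{\mathrm{old}}$ that have left). *)

theory Defs
  imports "HOL-Probability.Probability"
begin

definition hash_space :: "'a set \<Rightarrow> ('a \<Rightarrow> real) measure" where
  "hash_space U = PiM U (\<lambda>_. uniform_measure lborel {0..<1::real})"

definition sample_threshold :: "real \<Rightarrow> nat \<Rightarrow> 'a set \<Rightarrow> real" where
  "sample_threshold c n0 S_old = c * ln (real n0) / real (card S_old)"

definition sampled :: "real \<Rightarrow> ('a \<Rightarrow> real) \<Rightarrow> 'a set \<Rightarrow> 'a set" where
  "sampled q h A = {v \<in> A. h v \<le> q}"

definition frac_new :: "'a set \<Rightarrow> 'a set \<Rightarrow> real" where
  "frac_new Old Cur = real (card (Cur - Old)) / real (card Old)"

definition frac_left :: "'a set \<Rightarrow> 'a set \<Rightarrow> real" where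
  "frac_left Old Cur = real (card (Old - Cur)) / real (card Old)"

end

theory Submission
  imports Defs
begin

text \<open>Fix a time \<open>t\<close> with \<open>f\<^sub>N + f\<^sub>L > 1/3\<close>. If the sample nevertheless reports
  \<open>f\<^sub>N' + f\<^sub>L' \<le> 1/4\<close>, then either no ID of \<open>S\<^sub>o\<^sub>l\<^sub>d\<close> was sampled, or the weighted count
  \<open>4 \<cdot> new + 3 \<cdot> left - stayed\<close> of the sampled IDs is \<open>\<le> 0\<close>, although its mean is of
  order \<open>q |S\<^sub>o\<^sub>l\<^sub>d|\<close>. Both are lower tails of sums of independent Bernoulli(\<open>q\<close>)
  variables, so a Chernoff bound makes them \<open>exp (-\<Omega>(q |S\<^sub>o\<^sub>l\<^sub>d|)) = n\<^sub>0 powr -\<Omega>(c)\<close>,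
  since \<open>q |S\<^sub>o\<^sub>l\<^sub>d| = c log n\<^sub>0\<close>. A union bound over the \<open>T \<le> K n\<^sub>0\<^sup>\<gamma>\<close> times finishes the proof
  once \<open>c\<close> is large.\<close>

abbreviation uniform_unit :: "real measure" where
  "uniform_unit \<equiv> uniform_measure lborel {0..<1}"

lemma prob_space_uniform_unit: "prob_space uniform_unit"
  by (rule prob_space_uniform_measure) auto

lemma prob_space_hash_space: "prob_space (hash_space U)"
  unfolding hash_space_def by (rule prob_space_PiM) (rule prob_space_uniform_unit)

lemma emeasure_uniform_unit:
  assumes "A \<in> sets borel"
  shows "emeasure uniform_unit A = emeasure lborel ({0..<1} \<inter> A)"
  using assms by (simp add: divide_ennreal_def)

lemma emeasure_uniform_unit_atMost:
  assumes "0 \<le> q" "q \<le> 1"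
  shows "emeasure uniform_unit {..q} = q"
proof -
  have "{0..<1} \<inter> {..q} = (if q = 1 then {0..<1} else {0..q::real})"
    using assms by auto
  then show ?thesis
    using assms by (simp del: emeasure_uniform_measure add: emeasure_uniform_unit)
qed

lemma emeasure_uniform_unit_greaterThan:
  assumes "0 \<le> q" "q \<le> 1"
  shows "emeasure uniform_unit {q<..} = 1 - q"
proof -
  have "{0..<1} \<inter> {q<..} = {q<..<1::real}"
    using assms by auto
  then show ?thesis
    using assms by (simp del: emeasure_uniform_measure add: emeasure_uniform_unit ennreal_minus)
qed

lemma nn_integral_uniform_unit_exp_indicator:
  assumes "0 \<le> q" "q \<le> 1"
  shows "(\<integral>\<^sup>+ x. ennreal (exp (a * indicator {..q} x)) \<partial>uniform_unit) = 1 - q + q * exp a"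
proof -
  have "(\<integral>\<^sup>+ x. ennreal (exp (a * indicator {..q} x)) \<partial>uniform_unit)
      = (\<integral>\<^sup>+ x. ennreal (exp a) * indicator {..q} x + indicator {q<..} x \<partial>uniform_unit)"
    by (intro nn_integral_cong) (auto split: split_indicator)
  also have "\<dots> = ennreal (exp a) * emeasure uniform_unit {..q} + emeasure uniform_unit {q<..}"
    by (subst nn_integral_add) (auto simp: nn_integral_cmult)
  also have "\<dots> = 1 - q + q * exp a"
    using assms
    by (simp del: emeasure_uniform_measure
        add: emeasure_uniform_unit_atMost emeasure_uniform_unit_greaterThan
             ennreal_mult[symmetric] ennreal_plus[symmetric] algebra_simps)
  finally show ?thesis .
qed

definition weighted_sample_nonpos :: "'a set \<Rightarrow> real \<Rightarrow> ('a \<Rightarrow> real) \<Rightarrow> ('a \<Rightarrow> real) set" where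
  "weighted_sample_nonpos U q w =
     {h \<in> space (hash_space U). (\<Sum>v\<in>U. w v * indicator {..q} (h v)) \<le> 0}"

lemma sets_weighted_sample_nonpos:
  "finite U \<Longrightarrow> weighted_sample_nonpos U q w \<in> sets (hash_space U)"
  unfolding weighted_sample_nonpos_def hash_space_def by measurable

lemma one_minus_plus_le_exp:
  fixes q x :: real
  shows "1 - q + q * x \<le> exp (q * (x - 1))"
  using exp_ge_add_one_self[of "q * (x - 1)"] by (simp add: algebra_simps)

text \<open>Chernoff's bound: Markov's inequality applied to \<open>exp (- l * sum)\<close>, whose expectation
  factorises over the independent hash values.\<close>
lemma measure_weighted_sample_nonpos_le:
  assumes U: "finite U" and q: "0 \<le> q" "q \<le> 1" and l: "0 \<le> l"
  shows "measure (hash_space U) (weighted_sample_nonpos U q w)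
           \<le> exp (q * (\<Sum>v\<in>U. exp (- l * w v) - 1))"
proof -
  interpret product_sigma_finite "\<lambda>_::'a. uniform_unit"
    unfolding product_sigma_finite_def
    using prob_space_uniform_unit prob_space_imp_sigma_finite by blast
  interpret prob_space "hash_space U" by (rule prob_space_hash_space)
  let ?A = "weighted_sample_nonpos U q w"
  let ?Y = "\<lambda>h. \<Sum>v\<in>U. w v * indicator {..q} (h v)"
  have "emeasure (hash_space U) ?A = (\<integral>\<^sup>+ h. indicator ?A h \<partial>hash_space U)"
    using sets_weighted_sample_nonpos[OF U] by simp
  also have "\<dots> \<le> (\<integral>\<^sup>+ h. ennreal (exp (- l * ?Y h)) \<partial>hash_space U)"
  proof (intro nn_integral_mono)
    fix h
    have "h \<in> ?A \<Longrightarrow> 1 \<le> exp (- l * ?Y h)"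
      using l by (simp add: weighted_sample_nonpos_def mult_nonneg_nonpos)
    then show "indicator ?A h \<le> ennreal (exp (- l * ?Y h))"
      by (auto split: split_indicator)
  qed
  also have "\<dots> = (\<integral>\<^sup>+ h. (\<Prod>v\<in>U. ennreal (exp ((- l * w v) * indicator {..q} (h v)))) \<partial>hash_space U)"
    by (intro nn_integral_cong)
       (simp add: prod_ennreal exp_sum[OF U, symmetric] sum_distrib_left mult.assoc)
  also have "\<dots> = (\<Prod>v\<in>U. \<integral>\<^sup>+ x. ennreal (exp ((- l * w v) * indicator {..q} x)) \<partial>uniform_unit)"
    unfolding hash_space_def by (rule product_nn_integral_prod[OF U]) measurable
  also have "\<dots> = (\<Prod>v\<in>U. ennreal (1 - q + q * exp (- l * w v)))"
    using q by (intro prod.cong refl nn_integral_uniform_unit_exp_indicator)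
  also have "\<dots> = ennreal (\<Prod>v\<in>U. 1 - q + q * exp (- l * w v))"
    using q by (intro prod_ennreal) (simp add: add_nonneg_nonneg)
  also have "\<dots> \<le> ennreal (\<Prod>v\<in>U. exp (q * (exp (- l * w v) - 1)))"
    using q by (intro ennreal_leI prod_mono) (simp add: one_minus_plus_le_exp add_nonneg_nonneg)
  also have "\<dots> = ennreal (exp (q * (\<Sum>v\<in>U. exp (- l * w v) - 1)))"
    by (simp add: exp_sum[OF U, symmetric] sum_distrib_left)
  finally show ?thesis
    by (simp add: emeasure_eq_measure)
qed

text \<open>A sample with \<open>f\<^sub>N' + f\<^sub>L' \<le> 1/4\<close> satisfies \<open>4 (new + left) \<le> stayed + left\<close>
  on the sampled IDs, i.e. the weights below sum to \<open>\<le> 0\<close> over them.\<close>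
definition change_weight :: "'a set \<Rightarrow> 'a set \<Rightarrow> 'a \<Rightarrow> real" where
  "change_weight Old Cur v =
     (if v \<in> Cur - Old then 4 else if v \<in> Old - Cur then 3 else if v \<in> Old \<inter> Cur then -1 else 0)"

lemma sum_mult_indicator_subset:
  fixes c :: real
  assumes "finite U" "X \<subseteq> U"
  shows "(\<Sum>v\<in>U. c * indicator X v) = c * card X"
proof -
  have "(\<Sum>v\<in>U. c * indicator X v) = (\<Sum>v\<in>X. c)"
    using assms by (intro sum.mono_neutral_cong_right) (auto split: split_indicator)
  then show ?thesis
    by simp
qed

lemma sum_change_weight:
  fixes F :: "real \<Rightarrow> real"
  assumes "finite U" "Old \<subseteq> U" "Cur \<subseteq> U" "F 0 = 0"
  shows "(\<Sum>v\<in>U. F (change_weight Old Cur v))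
           = F 4 * card (Cur - Old) + F 3 * card (Old - Cur) + F (-1) * card (Old \<inter> Cur)"
proof -
  have "(\<Sum>v\<in>U. F (change_weight Old Cur v))
      = (\<Sum>v\<in>U. F 4 * indicator (Cur - Old) v + F 3 * indicator (Old - Cur) v
                  + F (-1) * indicator (Old \<inter> Cur) v)"
    using assms(4) by (intro sum.cong) (auto simp: change_weight_def split: split_indicator)
  also have "\<dots> = F 4 * card (Cur - Old) + F 3 * card (Old - Cur) + F (-1) * card (Old \<inter> Cur)"
  proof -
    have "Cur - Old \<subseteq> U" "Old - Cur \<subseteq> U" "Old \<inter> Cur \<subseteq> U"
      using assms(2,3) by auto
    then show ?thesis
      by (simp only: sum.distrib sum_mult_indicator_subset[OF assms(1)])
  qed
  finally show ?thesis .
qed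

lemma change_weight_mult_sampled:
  "change_weight Old Cur v * indicator {..q} (h v)
     = change_weight (sampled q h Old) (sampled q h Cur) v"
  by (simp add: change_weight_def sampled_def split: split_indicator)

lemma change_count_nonpos_if_frac_le_quarter:
  assumes "finite Old" "finite Cur" "Old \<noteq> {}"
    and "frac_new Old Cur + frac_left Old Cur \<le> 1/4"
  shows "4 * card (Cur - Old) + 3 * card (Old - Cur) - real (card (Old \<inter> Cur)) \<le> 0"
proof -
  have card_Old: "card Old = card (Old \<inter> Cur) + card (Old - Cur)"
    using assms(1) by (rule card_Int_Diff)
  have "real (card Old) > 0"
    using assms(1,3) by auto
  then have "real (card (Cur - Old)) + real (card (Old - Cur)) \<le> real (card Old) / 4"
    using assms(4)
    by (simp add: frac_new_def frac_left_def add_divide_distrib[symmetric] pos_divide_le_eq)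
  then show ?thesis
    using card_Old by simp
qed

lemma sampled_frac_le_quarter_subset:
  assumes U: "finite U" and "Old \<subseteq> U" "Cur \<subseteq> U"
  shows "{h \<in> space (hash_space U).
            frac_new (sampled q h Old) (sampled q h Cur) + frac_left (sampled q h Old) (sampled q h Cur)
              \<le> 1/4}
         \<subseteq> weighted_sample_nonpos U q (indicator Old) \<union> weighted_sample_nonpos U q (change_weight Old Cur)"
proof safe
  fix h assume h: "h \<in> space (hash_space U)"
    and frac: "frac_new (sampled q h Old) (sampled q h Cur) + frac_left (sampled q h Old) (sampled q h Cur)
                 \<le> 1/4"
    and not_change: "h \<notin> weighted_sample_nonpos U q (change_weight Old Cur)"
  have sub: "sampled q h Old \<subseteq> U" "sampled q h Cur \<subseteq> U"
    using assms by (auto simp: sampled_def)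
  have fin: "finite (sampled q h Old)" "finite (sampled q h Cur)"
    using sub U by (auto intro: finite_subset)
  have "(\<Sum>v\<in>U. change_weight Old Cur v * indicator {..q} (h v))
      = 4 * card (sampled q h Cur - sampled q h Old) + 3 * card (sampled q h Old - sampled q h Cur)
        - real (card (sampled q h Old \<inter> sampled q h Cur))"
    using sum_change_weight[OF U sub, of id] by (simp add: change_weight_mult_sampled)
  then have "sampled q h Old = {}"
    using not_change h change_count_nonpos_if_frac_le_quarter[OF fin _ frac]
    by (auto simp: weighted_sample_nonpos_def)
  then have "(\<Sum>v\<in>U. indicator Old v * indicator {..q} (h v) :: real) = 0"
    by (intro sum.neutral) (auto simp: sampled_def split: split_indicator)
  then show "h \<in> weighted_sample_nonpos U q (indicator Old)"
    using h by (simp add: weighted_sample_nonpos_def)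
qed

lemma measure_no_old_sampled_le:
  fixes q :: real
  assumes U: "finite U" and Old: "Old \<subseteq> U" and q: "0 \<le> q" "q \<le> 1"
  shows "measure (hash_space U) (weighted_sample_nonpos U q (indicator Old)) \<le> exp (- q * card Old / 2)"
proof -
  have "exp (-1) \<le> (1/2 :: real)"
    using exp_ge_add_one_self[of 1] by (simp add: exp_minus field_simps)
  have "(\<Sum>v\<in>U. exp (- 1 * indicator Old v) - 1) = (\<Sum>v\<in>U. (exp (-1) - 1) * indicator Old v :: real)"
    by (intro sum.cong) (auto split: split_indicator)
  also have "\<dots> = (exp (-1) - 1) * card Old"
    by (rule sum_mult_indicator_subset[OF U Old])
  also have "\<dots> \<le> - real (card Old) / 2"
    using mult_right_mono[OF \<open>exp (-1) \<le> 1/2\<close>, of "real (card Old)"] by (simp add: left_diff_distrib)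
  finally have "exp (q * (\<Sum>v\<in>U. exp (- 1 * indicator Old v) - 1)) \<le> exp (- q * card Old / 2)"
    using q mult_left_mono by fastforce
  then show ?thesis
    using order_trans[OF measure_weighted_sample_nonpos_le[OF U q, of 1 "indicator Old"]] by simp
qed

lemma measure_change_undetected_le:
  fixes q :: real
  assumes U: "finite U" and "Old \<subseteq> U" "Cur \<subseteq> U" and q: "0 \<le> q" "q \<le> 1"
    and change: "1/3 < frac_new Old Cur + frac_left Old Cur"
  shows "measure (hash_space U) (weighted_sample_nonpos U q (change_weight Old Cur))
           \<le> exp (- q * card Old / 200)"
proof -
  define a b d where "a = real (card (Old \<inter> Cur))" and "b = real (card (Old - Cur))"
    and "d = real (card (Cur - Old))"
  have "card Old = card (Old \<inter> Cur) + card (Old - Cur)"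
    using U \<open>Old \<subseteq> U\<close> finite_subset by (blast intro: card_Int_Diff)
  then have card_Old: "real (card Old) = a + b"
    by (simp add: a_def b_def)
  have "card Old \<noteq> 0"
    by (rule notI) (use change in \<open>simp add: frac_new_def frac_left_def\<close>)
  then have "real (card Old) / 3 < d + b"
    using change by (simp add: frac_new_def frac_left_def d_def b_def add_divide_distrib[symmetric]
                      divide_less_eq)
  have "exp (- (1/5)) \<le> (82/100 :: real)"
    using exp_lower_Taylor_quadratic[of "1/5 :: real"] by (simp add: exp_minus field_simps)
  moreover have "exp (- (3/20)) \<le> (87/100 :: real)"
    using exp_lower_Taylor_quadratic[of "3/20 :: real"] by (simp add: exp_minus field_simps)
  moreover have "exp (1/20) \<le> (1 + 1/20 + 1/400 :: real)"
    using exp_bound[of "1/20 :: real"] by (simp add: power2_eq_square)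
  ultimately have "(exp (- (1/5)) - 1) * d + (exp (- (3/20)) - 1) * b + (exp (1/20) - 1) * a
                     \<le> (- 18/100) * d + (- 13/100) * b + 21/400 * a"
    by (intro add_mono mult_right_mono) (auto simp: a_def b_def d_def)
  also have "\<dots> \<le> - real (card Old) / 200"
    using card_Old \<open>real (card Old) / 3 < d + b\<close> by (simp add: a_def b_def d_def)
  finally have "(\<Sum>v\<in>U. exp (- (1/20) * change_weight Old Cur v) - 1) \<le> - real (card Old) / 200"
    using sum_change_weight[OF assms(1-3), of "\<lambda>w. exp (- (1/20) * w) - 1"]
    by (simp add: a_def b_def d_def)
  then have "exp (q * (\<Sum>v\<in>U. exp (- (1/20) * change_weight Old Cur v) - 1))
               \<le> exp (- q * card Old / 200)"
    using q mult_left_mono by fastforce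
  then show ?thesis
    using order_trans[OF measure_weighted_sample_nonpos_le[OF U q, of "1/20" "change_weight Old Cur"]]
    by simp
qed

definition sample_misses_change :: "'a set \<Rightarrow> real \<Rightarrow> 'a set \<Rightarrow> (nat \<Rightarrow> 'a set) \<Rightarrow> nat \<Rightarrow> ('a \<Rightarrow> real) set" where
  "sample_misses_change U q Old S T =
     {h \<in> space (hash_space U). \<exists>t<T.
        frac_new (sampled q h Old) (sampled q h (S t))
          + frac_left (sampled q h Old) (sampled q h (S t)) \<le> 1/4 \<and>
        frac_new Old (S t) + frac_left Old (S t) > 1/3}"

lemma measure_sample_misses_change_le:
  fixes q :: real and S :: "nat \<Rightarrow> 'a set" and T :: nat
  assumes U: "finite U" and Old: "Old \<subseteq> U" and S: "\<forall>t<T. S t \<subseteq> U" and q: "0 \<le> q" "q \<le> 1"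
  shows "measure (hash_space U) (sample_misses_change U q Old S T) \<le> 2 * real T * exp (- q * card Old / 200)"
proof -
  interpret prob_space "hash_space U" by (rule prob_space_hash_space)
  define Z where "Z t = weighted_sample_nonpos U q (indicator Old)
                          \<union> weighted_sample_nonpos U q (change_weight Old (S t))" for t
  define bad where "bad = {t. t < T \<and> frac_new Old (S t) + frac_left Old (S t) > 1/3}"
  have bad_finite: "finite bad"
    unfolding bad_def by (rule finite_subset[of _ "{..<T}"]) auto
  have Z_sets: "Z t \<in> events" for t
    unfolding Z_def using sets_weighted_sample_nonpos[OF U] by blast
  have exp_le: "exp (- q * card Old / 2) \<le> exp (- q * card Old / 200)"
    using q by (simp add: divide_nonneg_nonneg mult_nonneg_nonneg)
  have Z_le: "prob (Z t) \<le> 2 * exp (- q * card Old / 200)" if "t \<in> bad" for t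
  proof -
    have "prob (Z t) \<le> prob (weighted_sample_nonpos U q (indicator Old))
                         + prob (weighted_sample_nonpos U q (change_weight Old (S t)))"
      unfolding Z_def by (intro measure_Un_le sets_weighted_sample_nonpos U)
    also have "\<dots> \<le> exp (- q * card Old / 2) + exp (- q * card Old / 200)"
      using that S measure_no_old_sampled_le[OF U Old q] measure_change_undetected_le[OF U Old _ q]
      unfolding bad_def by (intro add_mono) auto
    finally show ?thesis
      using exp_le by linarith
  qed
  have "sample_misses_change U q Old S T \<subseteq> (\<Union>t\<in>bad. Z t)"
    unfolding sample_misses_change_def
  proof safe
    fix h t assume "h \<in> space (hash_space U)" "t < T"
      and "frac_new (sampled q h Old) (sampled q h (S t))
             + frac_left (sampled q h Old) (sampled q h (S t)) \<le> 1/4"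
      and "frac_new Old (S t) + frac_left Old (S t) > 1/3"
    moreover have "S t \<subseteq> U"
      using S \<open>t < T\<close> by blast
    ultimately show "h \<in> (\<Union>t\<in>bad. Z t)"
      using sampled_frac_le_quarter_subset[OF U Old, of "S t" q] unfolding Z_def bad_def by blast
  qed
  then have "prob (sample_misses_change U q Old S T) \<le> prob (\<Union>t\<in>bad. Z t)"
    using Z_sets bad_finite by (intro finite_measure_mono sets.finite_UN) auto
  also have "\<dots> \<le> (\<Sum>t\<in>bad. prob (Z t))"
    using Z_sets bad_finite by (intro measure_UNION_le) auto
  also have "\<dots> \<le> card bad * (2 * exp (- q * card Old / 200))"
    using Z_le sum_bounded_above[of bad "\<lambda>t. prob (Z t)"] by simp
  also have "\<dots> \<le> T * (2 * exp (- q * card Old / 200))"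
    using card_mono[of "{..<T}" bad] by (intro mult_right_mono) (auto simp: bad_def)
  finally show ?thesis
    by (simp add: mult_ac)
qed

lemma mult_ln_le_self:
  fixes c x :: real
  assumes "0 \<le> c" "0 < x" "4 * c\<^sup>2 \<le> x"
  shows "c * ln x \<le> x"
proof -
  have "ln x = 2 * ln (sqrt x)"
    using assms(2) by (simp add: ln_sqrt)
  also have "\<dots> \<le> 2 * sqrt x"
    using assms(2) ln_le_minus_one[of "sqrt x"] by simp
  finally have "c * ln x \<le> (2 * c) * sqrt x"
    using assms(1) mult_left_mono by fastforce
  also have "\<dots> \<le> sqrt x * sqrt x"
    using assms real_le_rsqrt[of "2 * c" x] by (intro mult_right_mono) (auto simp: power_mult_distrib)
  also have "\<dots> = x"
    using assms(2) by simp
  finally show ?thesis .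
qed

lemma powr_union_bound_le:
  fixes x K T \<gamma> c' s :: real
  assumes "1 \<le> x" "0 \<le> K" "2 * K \<le> x" "T \<le> K * x powr \<gamma>" "\<gamma> + c' + 1 \<le> s"
  shows "2 * T * x powr (- s) \<le> x powr (- c')"
proof -
  have "2 * T * x powr (- s) \<le> 2 * (K * x powr \<gamma>) * x powr (- s)"
    using assms(4) by (intro mult_right_mono) auto
  also have "\<dots> = 2 * K * x powr (\<gamma> - s)"
    by (simp add: powr_diff powr_minus field_simps)
  also have "\<dots> \<le> 2 * K * x powr (- c' - 1)"
    using assms by (intro mult_left_mono powr_mono) auto
  also have "\<dots> = (2 * K / x) * x powr (- c')"
    using assms(1) by (simp add: powr_diff powr_minus field_simps)
  also have "\<dots> \<le> x powr (- c')"
    using assms(1,3) mult_right_mono[of "2 * K / x" 1 "x powr (- c')"] by simp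
  finally show ?thesis .
qed

lemma measure_sample_misses_change_threshold_le:
  fixes \<gamma> c c' K :: real and n0 T :: nat and S :: "nat \<Rightarrow> 'a set"
  assumes c: "0 \<le> c" "200 * (\<gamma> + c' + 1) \<le> c"
    and K: "0 \<le> K" and n0: "1 \<le> n0" "4 * c\<^sup>2 \<le> n0" "2 * K \<le> n0"
    and U: "finite U" "S_old \<subseteq> U" "n0 \<le> card S_old" "\<forall>t<T. S t \<subseteq> U"
    and T: "real T \<le> K * real n0 powr \<gamma>"
  shows "measure (hash_space U) (sample_misses_change U (sample_threshold c n0 S_old) S_old S T)
           \<le> real n0 powr (- c')"
proof -
  let ?q = "sample_threshold c n0 S_old"
  have card_pos: "real (card S_old) > 0"
    using n0(1) U(3) by linarith
  have q_card: "?q * card S_old = c * ln n0"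
    using card_pos by (simp add: sample_threshold_def)
  have "0 \<le> ?q"
    using c n0(1) by (simp add: sample_threshold_def)
  moreover have "?q \<le> 1"
    using mult_ln_le_self[OF c(1) _ n0(2)] n0(1) U(3) card_pos
    by (simp add: sample_threshold_def divide_le_eq)
  ultimately have "measure (hash_space U) (sample_misses_change U ?q S_old S T)
                     \<le> 2 * real T * exp (- ?q * card S_old / 200)"
    using U by (intro measure_sample_misses_change_le) auto
  also have "exp (- ?q * card S_old / 200) = real n0 powr (- (c / 200))"
    using n0(1) q_card by (simp add: powr_def)
  also have "2 * real T * real n0 powr (- (c / 200)) \<le> real n0 powr (- c')"
    using n0 K T c by (intro powr_union_bound_le[of _ K _ \<gamma>]) auto
  finally show ?thesis .
qed

theorem lemma5:
  fixes \<gamma> c' K :: real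
  assumes "\<gamma> \<ge> 1" and "c' > 0" and "K > 0"
  shows "\<exists>c0. \<forall>c\<ge>c0. \<exists>N. \<forall>(n0::nat)\<ge>N. \<forall>(U::'a set) S_old (S::nat \<Rightarrow> 'a set) (T::nat).
           finite U \<longrightarrow> S_old \<subseteq> U \<longrightarrow> card S_old \<ge> n0 \<longrightarrow>
           (\<forall>t<T. S t \<subseteq> U \<and> card (S t) \<ge> n0) \<longrightarrow>
           real T \<le> K * real n0 powr \<gamma> \<longrightarrow>
           measure (hash_space U)
             {h \<in> space (hash_space U). \<exists>t<T.
                let q = sample_threshold c n0 S_old;
                    S'_old = sampled q h S_old;
                    S' = sampled q h (S t)
                in frac_new S'_old S' + frac_left S'_old S' \<le> 1/4 \<and>
                   frac_new S_old (S t) + frac_left S_old (S t) > 1/3}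
           \<le> real n0 powr (- c')"
  apply (intro exI[of _ "200 * (\<gamma> + c' + 1)"] allI impI)
  subgoal for c
    apply (rule exI[of _ "max 1 (nat \<lceil>max (4 * c\<^sup>2) (2 * K)\<rceil>)"])
    apply (intro allI impI)
    subgoal for n0 U S_old S T
      using assms unfolding Let_def sample_misses_change_def[symmetric]
      by (intro measure_sample_misses_change_threshold_le[of c \<gamma> c']) (auto simp: nat_ceiling_le_eq)
    done
  done

end
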